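(* Let $(S,* )$ be a finite indecomposable cycle set of size $n$, with class $d$ and permutation group $\mathcal G$. Then $n$ divides $|\mathcal G|$. In particular, every prime divisor of $n$ is a prime divisor of $|\mathcal G|$ and of $d$, and if $d$ is a power of a prime $p$ then $n$ is also a power of $p$.
   Context: A cycle set is a set $S$ with a binary operation $*$ such that each $t\mapsto s*t$ is bijective and $(s*t)*(s*u)=(t*s)*(t*u)$ for all $s,t,u$. Write $S=\{s_1,\dots,s_n\}$, let $\psi(s)\in\mathfrak S_n$ satisfy $s_i*s_j=s_{\psi(s_i)(j)}$, and $\mathcal G=\langle\psi(s_1),\dots,\psi(s_n)\rangle\le\mathfrak S_n$, acting on $S$ via $\sigma(s_j)=s_{\sigma(j)}$. $S$ is decomposable if there is a partition $S=X\sqcup Y$ with $X,Y$ nonempty and $\psi(s)(X)\subseteq X$, $\psi(s)(Y)\subseteq Y$ for all $s\in S$; otherwise it is indecomposable. With $T(s)=s*s$ and $\psi_k(s)=\psi(T^{k-1}(s))\circ\cdots\circ\psi(s)$, the class $d$ is the least integer $d\ge1$ with $\psi_d(s)=\mathrm{id}$ for all $s$. *)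

theory Defs
  imports "HOL-Algebra.Generated_Groups" "HOL-Algebra.Bij" "HOL-Computational_Algebra.Primes"
begin

definition cycle_set :: "'a set \<Rightarrow> ('a \<Rightarrow> 'a \<Rightarrow> 'a) \<Rightarrow> bool" where
  "cycle_set S op \<longleftrightarrow>
     (\<forall>s\<in>S. bij_betw (op s) S S) \<and>
     (\<forall>s\<in>S. \<forall>t\<in>S. \<forall>u\<in>S. op (op s t) (op s u) = op (op t s) (op t u))"

definition cs_psi :: "'a set \<Rightarrow> ('a \<Rightarrow> 'a \<Rightarrow> 'a) \<Rightarrow> 'a \<Rightarrow> ('a \<Rightarrow> 'a)" where
  "cs_psi S op s = (\<lambda>t\<in>S. op s t)"

definition cs_group :: "'a set \<Rightarrow> ('a \<Rightarrow> 'a \<Rightarrow> 'a) \<Rightarrow> ('a \<Rightarrow> 'a) set" where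
  "cs_group S op = generate (BijGroup S) (cs_psi S op ` S)"

definition decomposable :: "'a set \<Rightarrow> ('a \<Rightarrow> 'a \<Rightarrow> 'a) \<Rightarrow> bool" where
  "decomposable S op \<longleftrightarrow>
     (\<exists>X Y. X \<noteq> {} \<and> Y \<noteq> {} \<and> X \<union> Y = S \<and> X \<inter> Y = {} \<and>
        (\<forall>s\<in>S. cs_psi S op s ` X \<subseteq> X \<and> cs_psi S op s ` Y \<subseteq> Y))"

definition indecomposable :: "'a set \<Rightarrow> ('a \<Rightarrow> 'a \<Rightarrow> 'a) \<Rightarrow> bool" where
  "indecomposable S op \<longleftrightarrow> \<not> decomposable S op"

definition cs_T :: "('a \<Rightarrow> 'a \<Rightarrow> 'a) \<Rightarrow> 'a \<Rightarrow> 'a" where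
  "cs_T op s = op s s"

primrec cs_psik :: "('a \<Rightarrow> 'a \<Rightarrow> 'a) \<Rightarrow> nat \<Rightarrow> 'a \<Rightarrow> 'a \<Rightarrow> 'a" where
  "cs_psik op 0 s t = t"
| "cs_psik op (Suc k) s t = op ((cs_T op ^^ k) s) (cs_psik op k s t)"

definition is_class :: "'a set \<Rightarrow> ('a \<Rightarrow> 'a \<Rightarrow> 'a) \<Rightarrow> nat \<Rightarrow> bool" where
  "is_class S op d \<longleftrightarrow>
     d \<ge> 1 \<and> (\<forall>s\<in>S. \<forall>t\<in>S. cs_psik op d s t = t) \<and>
     (\<forall>d'. 1 \<le> d' \<and> d' < d \<longrightarrow> \<not> (\<forall>s\<in>S. \<forall>t\<in>S. cs_psik op d' s t = t))"

end

theory Submission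
  imports Defs "HOL-Algebra.Group_Action" "HOL-Library.Multiset"
begin

(* Indecomposability says exactly that the group G generated by the permutations psi(s) acts
   transitively on S, so n divides |G| by the orbit-stabiliser theorem.

   For |G| dvd d^n, let a letter t act on the right on permutations by
   sigma . t = sigma mu(sigma^-1 t), where mu(s) = psi(s)^-1. The cycle identity, in the form
   mu(s) mu(s*t) = mu(t) mu(t*s), makes any two letters commute, so the letters assemble to an
   action of the free commutative monoid N^S, and the orbit of the identity is G. Since
   1 . s^k = psi_k(s)^-1, the class d makes s^d act trivially; hence the action factors through
   the group (Z/d)^S, which then acts transitively on G, and |G| divides d^n. The claims about
   primes follow from n dvd |G| dvd d^n. *)

lemma card_eq_card_fibre_mult_card_image:
  assumes "finite A" and "\<And>y. y \<in> f ` A \<Longrightarrow> card {x \<in> A. f x = y} = k"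
  shows "card A = k * card (f ` A)"
proof -
  have "{y \<in> f ` A. f x = y} = {f x}" if "x \<in> A" for x
    using that by auto
  then have "card A = (\<Sum>x\<in>A. card {y \<in> f ` A. f x = y})"
    by simp
  also have "\<dots> = k * card (f ` A)"
    by (rule sum_multicount) (use assms in auto)
  finally show ?thesis .
qed

lemma replicate_mset_add: "replicate_mset (m + n) x = replicate_mset m x + replicate_mset n x"
  by (induction m) simp_all

lemma carrier_BijGroup [simp]: "carrier (BijGroup S) = Bij S"
  by (simp add: BijGroup_def)

lemma BijGroup_mult_closed: "f \<in> Bij S \<Longrightarrow> g \<in> Bij S \<Longrightarrow> f \<otimes>\<^bsub>BijGroup S\<^esub> g \<in> Bij S"
  using monoid.m_closed[OF group.is_monoid[OF group_BijGroup]] by simp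

lemma BijGroup_inv_closed: "f \<in> Bij S \<Longrightarrow> inv\<^bsub>BijGroup S\<^esub> f \<in> Bij S"
  using group.inv_closed[OF group_BijGroup] by simp

lemma BijGroup_one_closed: "\<one>\<^bsub>BijGroup S\<^esub> \<in> Bij S"
  using monoid.one_closed[OF group.is_monoid[OF group_BijGroup]] by simp

lemma BijGroup_mult_apply:
  "f \<in> Bij S \<Longrightarrow> g \<in> Bij S \<Longrightarrow> x \<in> S \<Longrightarrow> (f \<otimes>\<^bsub>BijGroup S\<^esub> g) x = f (g x)"
  by (simp add: BijGroup_def compose_def)

lemma BijGroup_one_apply: "x \<in> S \<Longrightarrow> \<one>\<^bsub>BijGroup S\<^esub> x = x"
  by (simp add: BijGroup_def)

lemma BijGroup_inv_apply_closed: "f \<in> Bij S \<Longrightarrow> x \<in> S \<Longrightarrow> (inv\<^bsub>BijGroup S\<^esub> f) x \<in> S"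
  by (simp add: inv_BijGroup Bij_inv_into_mem)

lemma BijGroup_inv_apply_left: "f \<in> Bij S \<Longrightarrow> x \<in> S \<Longrightarrow> (inv\<^bsub>BijGroup S\<^esub> f) (f x) = x"
  by (auto simp add: inv_BijGroup Bij_def bij_betw_inv_into_left bij_betw_apply)

lemma Bij_apply_closed: "f \<in> Bij S \<Longrightarrow> x \<in> S \<Longrightarrow> f x \<in> S"
  using Bij_imp_funcset by blast

lemma Bij_eqI: "f \<in> Bij S \<Longrightarrow> g \<in> Bij S \<Longrightarrow> (\<And>x. x \<in> S \<Longrightarrow> f x = g x) \<Longrightarrow> f = g"
  by (meson Bij_imp_extensional extensionalityI)

lemma finite_Bij: "finite S \<Longrightarrow> finite (Bij S)"
proof (rule finite_subset)
  show "Bij S \<subseteq> S \<rightarrow>\<^sub>E S"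
    by (auto simp: Bij_def PiE_def bij_betw_apply)
qed (rule finite_PiE)

lemma card_orbit_dvd_card_subgroup:
  assumes "subgroup H (BijGroup S)" and "x \<in> S"
  shows "card ((\<lambda>g. g x) ` H) dvd card H"
proof -
  have "group_action (BijGroup S) S (\<lambda>g. g)"
    by (simp add: group_action_def group_hom_def group_hom_axioms_def group_BijGroup hom_def)
  then interpret H: group_action "BijGroup S\<lparr>carrier := H\<rparr>" S "\<lambda>g. g"
    using assms(1) by (rule group_action.induced_action)
  have "card (orbit (BijGroup S\<lparr>carrier := H\<rparr>) (\<lambda>g. g) x)
        * card (stabilizer (BijGroup S\<lparr>carrier := H\<rparr>) (\<lambda>g. g) x) = card H"
    using H.orbit_stabilizer_theorem[OF assms(2)] by (simp add: order_def)
  moreover have "orbit (BijGroup S\<lparr>carrier := H\<rparr>) (\<lambda>g. g) x = (\<lambda>g. g x) ` H"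
    by (auto simp: orbit_def)
  ultimately show ?thesis
    by (metis dvd_triv_left)
qed

locale finite_cycle_set =
  fixes S :: "'a set" and op :: "'a \<Rightarrow> 'a \<Rightarrow> 'a"
  assumes cycle_set: "cycle_set S op" and finite_S: "finite S"
begin

abbreviation Sym :: "('a \<Rightarrow> 'a) monoid" where "Sym \<equiv> BijGroup S"

sublocale Sym: group Sym
  by (rule group_BijGroup)

abbreviation psi :: "'a \<Rightarrow> 'a \<Rightarrow> 'a" where "psi \<equiv> cs_psi S op"

definition mu :: "'a \<Rightarrow> 'a \<Rightarrow> 'a" where "mu s = inv\<^bsub>Sym\<^esub> (psi s)"

lemma op_closed: "s \<in> S \<Longrightarrow> t \<in> S \<Longrightarrow> op s t \<in> S"
  using cycle_set by (auto simp: cycle_set_def bij_betw_def)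

lemma psi_apply: "t \<in> S \<Longrightarrow> psi s t = op s t"
  by (simp add: cs_psi_def)

lemma psi_in_Bij: "s \<in> S \<Longrightarrow> psi s \<in> Bij S"
  using cycle_set by (auto simp: cs_psi_def cycle_set_def Bij_def bij_betw_def inj_on_def)

lemma mu_in_Bij: "s \<in> S \<Longrightarrow> mu s \<in> Bij S"
  by (simp add: mu_def BijGroup_inv_closed psi_in_Bij)

lemma psi_cycle:
  assumes "x \<in> S" and "y \<in> S"
  shows "psi (op x y) \<otimes>\<^bsub>Sym\<^esub> psi x = psi (op y x) \<otimes>\<^bsub>Sym\<^esub> psi y"
proof (rule Bij_eqI)
  show "psi (op x y) \<otimes>\<^bsub>Sym\<^esub> psi x \<in> Bij S" and "psi (op y x) \<otimes>\<^bsub>Sym\<^esub> psi y \<in> Bij S"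
    using assms by (simp_all add: BijGroup_mult_closed psi_in_Bij op_closed)
  fix z assume "z \<in> S"
  then show "(psi (op x y) \<otimes>\<^bsub>Sym\<^esub> psi x) z = (psi (op y x) \<otimes>\<^bsub>Sym\<^esub> psi y) z"
    using assms cycle_set
    by (simp add: cycle_set_def BijGroup_mult_apply psi_in_Bij op_closed psi_apply)
qed

lemma mu_cycle:
  assumes "x \<in> S" and "y \<in> S"
  shows "mu x \<otimes>\<^bsub>Sym\<^esub> mu (op x y) = mu y \<otimes>\<^bsub>Sym\<^esub> mu (op y x)"
proof -
  have inv_prod: "mu u \<otimes>\<^bsub>Sym\<^esub> mu (op u v) = inv\<^bsub>Sym\<^esub> (psi (op u v) \<otimes>\<^bsub>Sym\<^esub> psi u)"
    if "u \<in> S" and "v \<in> S" for u v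
    using that by (simp add: mu_def Sym.inv_mult_group psi_in_Bij op_closed)
  show ?thesis
    using assms by (simp add: inv_prod psi_cycle)
qed

(* Outside Bij S \<times> S a letter acts as the identity; this makes act a commuting family on the
   whole type, as fold_mset requires. *)
definition act :: "'a \<Rightarrow> ('a \<Rightarrow> 'a) \<Rightarrow> ('a \<Rightarrow> 'a)" where
  "act t \<sigma> = (if \<sigma> \<in> Bij S \<and> t \<in> S then \<sigma> \<otimes>\<^bsub>Sym\<^esub> mu ((inv\<^bsub>Sym\<^esub> \<sigma>) t) else \<sigma>)"

lemma act_eq: "\<sigma> \<in> Bij S \<Longrightarrow> t \<in> S \<Longrightarrow> act t \<sigma> = \<sigma> \<otimes>\<^bsub>Sym\<^esub> mu ((inv\<^bsub>Sym\<^esub> \<sigma>) t)"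
  by (simp add: act_def)

lemma act_in_Bij: "\<sigma> \<in> Bij S \<Longrightarrow> act t \<sigma> \<in> Bij S"
  by (simp add: act_def BijGroup_mult_closed mu_in_Bij BijGroup_inv_apply_closed)

lemma inv_mult_mu_apply:
  assumes "\<sigma> \<in> Bij S" and "x \<in> S" and "u \<in> S"
  shows "(inv\<^bsub>Sym\<^esub> (\<sigma> \<otimes>\<^bsub>Sym\<^esub> mu x)) u = op x ((inv\<^bsub>Sym\<^esub> \<sigma>) u)"
proof -
  have "inv\<^bsub>Sym\<^esub> (\<sigma> \<otimes>\<^bsub>Sym\<^esub> mu x) = inv\<^bsub>Sym\<^esub> (mu x) \<otimes>\<^bsub>Sym\<^esub> inv\<^bsub>Sym\<^esub> \<sigma>"
    using assms by (simp add: Sym.inv_mult_group mu_in_Bij)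
  also have "inv\<^bsub>Sym\<^esub> (mu x) = psi x"
    using assms by (simp add: mu_def Sym.inv_inv psi_in_Bij)
  finally show ?thesis
    using assms
    by (simp add: BijGroup_mult_apply psi_in_Bij BijGroup_inv_closed BijGroup_inv_apply_closed
        psi_apply)
qed

lemma act_commute: "act u (act t \<sigma>) = act t (act u \<sigma>)"
proof (cases "\<sigma> \<in> Bij S \<and> t \<in> S \<and> u \<in> S")
  case False
  have trivial: "act v \<tau> = \<tau>" if "\<tau> \<notin> Bij S \<or> v \<notin> S" for v \<tau>
    using that by (auto simp: act_def)
  consider "\<sigma> \<notin> Bij S" | "t \<notin> S" | "u \<notin> S"
    using False by blast
  then show ?thesis
    by cases (simp_all add: trivial)
next
  case True
  then have \<sigma>: "\<sigma> \<in> Bij S" and t: "t \<in> S" and u: "u \<in> S"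
    by auto
  define x where "x = (inv\<^bsub>Sym\<^esub> \<sigma>) t"
  define y where "y = (inv\<^bsub>Sym\<^esub> \<sigma>) u"
  have x: "x \<in> S" and y: "y \<in> S"
    using \<sigma> t u by (simp_all add: x_def y_def BijGroup_inv_apply_closed)
  have "act u (act t \<sigma>) = \<sigma> \<otimes>\<^bsub>Sym\<^esub> mu x \<otimes>\<^bsub>Sym\<^esub> mu (op x y)"
    using \<sigma> t u x by (simp add: act_eq x_def[symmetric] y_def inv_mult_mu_apply
        BijGroup_mult_closed mu_in_Bij)
  also have "\<dots> = \<sigma> \<otimes>\<^bsub>Sym\<^esub> mu y \<otimes>\<^bsub>Sym\<^esub> mu (op y x)"
    using \<sigma> x y by (simp add: Sym.m_assoc mu_in_Bij op_closed mu_cycle[OF x y])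
  also have "\<dots> = act t (act u \<sigma>)"
    using \<sigma> t u y by (simp add: act_eq y_def[symmetric] x_def inv_mult_mu_apply
        BijGroup_mult_closed mu_in_Bij)
  finally show ?thesis .
qed

sublocale act: comp_fun_commute act
  by unfold_locales (auto simp: act_commute)

definition perm_of_mset :: "'a multiset \<Rightarrow> 'a \<Rightarrow> 'a" where
  "perm_of_mset M = fold_mset act \<one>\<^bsub>Sym\<^esub> M"

abbreviation mset_perms :: "('a \<Rightarrow> 'a) set" where
  "mset_perms \<equiv> perm_of_mset ` {M. set_mset M \<subseteq> S}"

lemma perm_of_mset_empty [simp]: "perm_of_mset {#} = \<one>\<^bsub>Sym\<^esub>"
  by (simp add: perm_of_mset_def)

lemma perm_of_mset_add_mset [simp]: "perm_of_mset (add_mset t M) = act t (perm_of_mset M)"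
  by (simp add: perm_of_mset_def)

lemma perm_of_mset_union_cong:
  "perm_of_mset M = perm_of_mset M' \<Longrightarrow> perm_of_mset (M + N) = perm_of_mset (M' + N)"
  by (simp add: perm_of_mset_def)

lemma perm_of_mset_in_Bij: "perm_of_mset M \<in> Bij S"
  by (induction M) (simp_all add: act_in_Bij BijGroup_one_closed)

lemma psi_image_subset_Bij: "psi ` S \<subseteq> Bij S"
  by (auto simp: psi_in_Bij)

lemma subgroup_cs_group: "subgroup (cs_group S op) Sym"
  unfolding cs_group_def using psi_image_subset_Bij by (simp add: Sym.generate_is_subgroup)

lemma cs_group_subset_Bij: "cs_group S op \<subseteq> Bij S"
  using subgroup.subset[OF subgroup_cs_group] by simp

lemma psi_in_cs_group: "s \<in> S \<Longrightarrow> psi s \<in> cs_group S op"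
  unfolding cs_group_def by (rule generate.incl) simp

lemma mu_in_cs_group: "s \<in> S \<Longrightarrow> mu s \<in> cs_group S op"
  unfolding cs_group_def mu_def by (rule generate.inv) simp

lemma perm_of_mset_in_cs_group: "perm_of_mset M \<in> cs_group S op"
proof (induction M)
  case empty
  show ?case
    using subgroup.one_closed[OF subgroup_cs_group] by simp
next
  case (add t M)
  then show ?case
    using perm_of_mset_in_Bij[of M] subgroup.m_closed[OF subgroup_cs_group]
    by (auto simp: act_def mu_in_cs_group BijGroup_inv_apply_closed)
qed

lemma mset_perms_mult_mu:
  assumes "\<sigma> \<in> mset_perms" and "s \<in> S"
  shows "\<sigma> \<otimes>\<^bsub>Sym\<^esub> mu s \<in> mset_perms"
proof -
  obtain M where M: "set_mset M \<subseteq> S" and \<sigma>: "\<sigma> = perm_of_mset M"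
    using assms(1) by blast
  then have "\<sigma> \<in> Bij S"
    by (simp add: perm_of_mset_in_Bij)
  then have "perm_of_mset (add_mset (\<sigma> s) M) = \<sigma> \<otimes>\<^bsub>Sym\<^esub> mu s"
    using assms(2) by (simp add: \<sigma>[symmetric] act_eq Bij_apply_closed BijGroup_inv_apply_left)
  moreover have "set_mset (add_mset (\<sigma> s) M) \<subseteq> S"
    using M assms(2) \<open>\<sigma> \<in> Bij S\<close> by (simp add: Bij_apply_closed)
  ultimately show ?thesis
    by (metis image_eqI mem_Collect_eq)
qed

(* Right multiplication by mu s is injective on the finite set mset_perms, hence surjective:
   this gives closure under its inverse psi s. *)
lemma mset_perms_mult_psi:
  assumes "\<sigma> \<in> mset_perms" and "s \<in> S"
  shows "\<sigma> \<otimes>\<^bsub>Sym\<^esub> psi s \<in> mset_perms"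
proof -
  have mset_perms_Bij: "mset_perms \<subseteq> Bij S"
    using perm_of_mset_in_Bij by auto
  have "(\<lambda>\<tau>. \<tau> \<otimes>\<^bsub>Sym\<^esub> mu s) ` mset_perms = mset_perms"
  proof (rule endo_inj_surj)
    show "finite mset_perms"
      using finite_subset[OF mset_perms_Bij finite_Bij[OF finite_S]] .
    show "(\<lambda>\<tau>. \<tau> \<otimes>\<^bsub>Sym\<^esub> mu s) ` mset_perms \<subseteq> mset_perms"
      using mset_perms_mult_mu assms(2) by auto
    show "inj_on (\<lambda>\<tau>. \<tau> \<otimes>\<^bsub>Sym\<^esub> mu s) mset_perms"
      using mset_perms_Bij mu_in_Bij[OF assms(2)] by (intro inj_onI) (simp add: subset_iff)
  qed
  then have "\<sigma> \<in> (\<lambda>\<tau>. \<tau> \<otimes>\<^bsub>Sym\<^esub> mu s) ` mset_perms"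
    using assms(1) by simp
  then obtain \<tau> where "\<tau> \<in> mset_perms" and "\<sigma> = \<tau> \<otimes>\<^bsub>Sym\<^esub> mu s"
    by (rule imageE)
  moreover have "\<tau> \<in> Bij S"
    using \<open>\<tau> \<in> mset_perms\<close> mset_perms_Bij by blast
  then have "\<tau> \<otimes>\<^bsub>Sym\<^esub> mu s \<otimes>\<^bsub>Sym\<^esub> psi s = \<tau>"
    using psi_in_Bij[OF assms(2)] by (simp add: mu_def Sym.m_assoc BijGroup_inv_closed)
  ultimately show ?thesis
    by simp
qed

lemma mset_perms_mult_cs_group:
  assumes "g \<in> cs_group S op" and "\<sigma> \<in> mset_perms"
  shows "\<sigma> \<otimes>\<^bsub>Sym\<^esub> g \<in> mset_perms"
  using assms unfolding cs_group_def
proof (induction g arbitrary: \<sigma> rule: generate.induct)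
  case one
  then show ?case
    using perm_of_mset_in_Bij by auto
next
  case (incl h)
  then show ?case
    using mset_perms_mult_psi by blast
next
  case (inv h)
  then obtain s where "s \<in> S" and "inv\<^bsub>Sym\<^esub> h = mu s"
    by (auto simp: mu_def)
  then show ?case
    using mset_perms_mult_mu inv.prems by simp
next
  case (eng h1 h2)
  have "h1 \<in> Bij S" and "h2 \<in> Bij S"
    using eng.hyps Sym.generate_in_carrier psi_image_subset_Bij by simp_all
  moreover have "\<sigma> \<in> Bij S"
    using eng.prems perm_of_mset_in_Bij by auto
  ultimately have "\<sigma> \<otimes>\<^bsub>Sym\<^esub> (h1 \<otimes>\<^bsub>Sym\<^esub> h2) = \<sigma> \<otimes>\<^bsub>Sym\<^esub> h1 \<otimes>\<^bsub>Sym\<^esub> h2"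
    by (simp add: Sym.m_assoc)
  then show ?case
    using eng.IH eng.prems by presburger
qed

lemma cs_group_eq_mset_perms: "cs_group S op = mset_perms"
proof
  show "mset_perms \<subseteq> cs_group S op"
    using perm_of_mset_in_cs_group by blast
  show "cs_group S op \<subseteq> mset_perms"
  proof
    fix g assume g: "g \<in> cs_group S op"
    have "\<one>\<^bsub>Sym\<^esub> \<in> mset_perms"
      by (metis perm_of_mset_empty image_eqI mem_Collect_eq set_mset_empty empty_subsetI)
    then have "\<one>\<^bsub>Sym\<^esub> \<otimes>\<^bsub>Sym\<^esub> g \<in> mset_perms"
      by (rule mset_perms_mult_cs_group[OF g])
    then show "g \<in> mset_perms"
      using g cs_group_subset_Bij by auto
  qed
qed

lemma cs_group_orbit_eq_if_indecomposable:
  assumes "indecomposable S op" and "s0 \<in> S"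
  shows "(\<lambda>g. g s0) ` cs_group S op = S"
proof (rule ccontr)
  define X where "X = (\<lambda>g. g s0) ` cs_group S op"
  define Y where "Y = S - X"
  assume "(\<lambda>g. g s0) ` cs_group S op \<noteq> S"
  moreover have "X \<subseteq> S"
    using cs_group_subset_Bij assms(2) by (auto simp: X_def Bij_apply_closed)
  ultimately have Y_ne: "Y \<noteq> {}" and XY: "X \<union> Y = S" "X \<inter> Y = {}"
    by (auto simp: X_def Y_def)
  have X_ne: "X \<noteq> {}"
    using subgroup.one_closed[OF subgroup_cs_group] by (auto simp: X_def)
  have X_inv: "psi s ` X \<subseteq> X" if "s \<in> S" for s
  proof
    fix z assume "z \<in> psi s ` X"
    then obtain g where g: "g \<in> cs_group S op" and "z = psi s (g s0)"
      by (auto simp: X_def)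
    then have "z = (psi s \<otimes>\<^bsub>Sym\<^esub> g) s0"
      using that assms(2) cs_group_subset_Bij by (auto simp: BijGroup_mult_apply psi_in_Bij)
    moreover have "psi s \<otimes>\<^bsub>Sym\<^esub> g \<in> cs_group S op"
      using subgroup.m_closed[OF subgroup_cs_group psi_in_cs_group[OF that] g] .
    ultimately show "z \<in> X"
      by (simp add: X_def)
  qed
  have Y_inv: "psi s ` Y \<subseteq> Y" if "s \<in> S" for s
  proof
    fix z assume "z \<in> psi s ` Y"
    then obtain y where y: "y \<in> S" "y \<notin> X" and z: "z = psi s y"
      by (auto simp: Y_def)
    have "z \<notin> X"
    proof
      assume "z \<in> X"
      then obtain g where g: "g \<in> cs_group S op" and "z = g s0"
        by (auto simp: X_def)
      have "y = (inv\<^bsub>Sym\<^esub> (psi s)) z"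
        using that y(1) z by (simp add: BijGroup_inv_apply_left psi_in_Bij)
      also have "\<dots> = (mu s \<otimes>\<^bsub>Sym\<^esub> g) s0"
        using that g \<open>z = g s0\<close> cs_group_subset_Bij assms(2)
        by (auto simp: mu_def BijGroup_mult_apply mu_in_Bij[unfolded mu_def])
      finally have "y \<in> X"
        using subgroup.m_closed[OF subgroup_cs_group mu_in_cs_group[OF that] g]
        by (simp add: X_def)
      then show False
        using y(2) by contradiction
    qed
    then show "z \<in> Y"
      using that y(1) z by (simp add: Y_def Bij_apply_closed psi_in_Bij)
  qed
  have "decomposable S op"
    unfolding decomposable_def
    by (intro exI[of _ X] exI[of _ Y] conjI ballI X_ne Y_ne XY X_inv Y_inv)
  then show False
    using assms(1) by (simp add: indecomposable_def)
qed

lemma card_dvd_card_cs_group: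
  assumes "indecomposable S op" and "s0 \<in> S"
  shows "card S dvd card (cs_group S op)"
  using card_orbit_dvd_card_subgroup[OF subgroup_cs_group assms(2)]
  by (simp add: cs_group_orbit_eq_if_indecomposable[OF assms])

lemma cs_T_power_closed: "s \<in> S \<Longrightarrow> (cs_T op ^^ k) s \<in> S"
  by (induction k) (auto simp: cs_T_def op_closed)

lemma cs_psik_self: "cs_psik op k s s = (cs_T op ^^ k) s"
  by (induction k) (simp_all add: cs_T_def[of op "(cs_T op ^^ _) s"])

lemma inv_perm_of_replicate_apply:
  assumes "s \<in> S" and "t \<in> S"
  shows "(inv\<^bsub>Sym\<^esub> (perm_of_mset (replicate_mset k s))) t = cs_psik op k s t"
  using assms(2)
proof (induction k arbitrary: t)
  case 0
  then show ?case
    by (simp add: BijGroup_one_apply)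
next
  case (Suc k)
  let ?\<sigma> = "perm_of_mset (replicate_mset k s)"
  have "(inv\<^bsub>Sym\<^esub> ?\<sigma>) s = (cs_T op ^^ k) s"
    using Suc.IH[OF assms(1)] by (simp add: cs_psik_self)
  then have "perm_of_mset (replicate_mset (Suc k) s) = ?\<sigma> \<otimes>\<^bsub>Sym\<^esub> mu ((cs_T op ^^ k) s)"
    using assms(1) by (simp add: act_eq perm_of_mset_in_Bij)
  then have "(inv\<^bsub>Sym\<^esub> (perm_of_mset (replicate_mset (Suc k) s))) t
      = op ((cs_T op ^^ k) s) ((inv\<^bsub>Sym\<^esub> ?\<sigma>) t)"
    using assms(1) Suc.prems by (simp add: inv_mult_mu_apply perm_of_mset_in_Bij cs_T_power_closed)
  then show ?case
    using Suc.IH[OF Suc.prems] by simp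
qed

definition mset_of :: "('a \<Rightarrow> nat) \<Rightarrow> 'a multiset" where
  "mset_of f = (\<Sum>x\<in>S. replicate_mset (f x) x)"

lemma mset_of_add: "mset_of (\<lambda>x. f x + g x) = mset_of f + mset_of g"
  by (simp add: mset_of_def replicate_mset_add sum.distrib)

lemma mset_of_cong: "(\<And>x. x \<in> S \<Longrightarrow> f x = g x) \<Longrightarrow> mset_of f = mset_of g"
  unfolding mset_of_def by (rule sum.cong) auto

lemma mset_of_count: "set_mset M \<subseteq> S \<Longrightarrow> mset_of (count M) = M"
proof (rule multiset_eqI)
  fix y
  assume "set_mset M \<subseteq> S"
  then have "count M y = (if y \<in> S then count M y else 0)"
    by (auto simp: not_in_iff[symmetric])
  then show "count (mset_of (count M)) y = count M y"
    using finite_S by (simp add: mset_of_def count_sum sum.delta)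
qed

definition perm_of_fun :: "('a \<Rightarrow> nat) \<Rightarrow> 'a \<Rightarrow> 'a" where
  "perm_of_fun f = perm_of_mset (mset_of f)"

end

locale finite_cycle_set_period = finite_cycle_set +
  fixes d :: nat
  assumes period_pos: "0 < d" and cs_psik_period: "\<forall>s\<in>S. \<forall>t\<in>S. cs_psik op d s t = t"
begin

lemma perm_of_replicate_period: "s \<in> S \<Longrightarrow> perm_of_mset (replicate_mset d s) = \<one>\<^bsub>Sym\<^esub>"
proof -
  assume s: "s \<in> S"
  let ?\<sigma> = "perm_of_mset (replicate_mset d s)"
  have "inv\<^bsub>Sym\<^esub> ?\<sigma> = \<one>\<^bsub>Sym\<^esub>"
  proof (rule Bij_eqI)
    show "inv\<^bsub>Sym\<^esub> ?\<sigma> \<in> Bij S" and "\<one>\<^bsub>Sym\<^esub> \<in> Bij S"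
      using perm_of_mset_in_Bij by (simp_all add: BijGroup_inv_closed BijGroup_one_closed)
    fix t assume "t \<in> S"
    then show "(inv\<^bsub>Sym\<^esub> ?\<sigma>) t = \<one>\<^bsub>Sym\<^esub> t"
      using s cs_psik_period by (simp add: inv_perm_of_replicate_apply BijGroup_one_apply)
  qed
  then show ?thesis
    using perm_of_mset_in_Bij by (metis Sym.inv_inv Sym.inv_one carrier_BijGroup)
qed

lemma perm_of_mset_add_replicate_period_mult:
  "s \<in> S \<Longrightarrow> perm_of_mset (N + replicate_mset (d * k) s) = perm_of_mset N"
proof (induction k)
  case (Suc k)
  have "perm_of_mset (replicate_mset d s + (N + replicate_mset (d * k) s))
      = perm_of_mset ({#} + (N + replicate_mset (d * k) s))"
    using Suc.prems by (intro perm_of_mset_union_cong) (simp add: perm_of_replicate_period)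
  then show ?case
    using Suc by (simp add: replicate_mset_add add_ac)
qed simp

lemma perm_of_mset_add_mset_of_period_mult:
  "perm_of_mset (N + mset_of (\<lambda>x. d * h x)) = perm_of_mset N"
proof -
  have "perm_of_mset (N + (\<Sum>x\<in>X. replicate_mset (d * h x) x)) = perm_of_mset N"
    if "finite X" and "X \<subseteq> S" for X
    using that
  proof (induction X rule: finite_induct)
    case (insert x X)
    then show ?case
      using perm_of_mset_add_replicate_period_mult[of x "N + (\<Sum>x\<in>X. replicate_mset (d * h x) x)"]
      by (simp add: add_ac)
  qed simp
  then show ?thesis
    using finite_S by (simp add: mset_of_def)
qed

lemma perm_of_fun_cong_mod:
  assumes "\<And>x. x \<in> S \<Longrightarrow> f x mod d = g x mod d"
  shows "perm_of_fun f = perm_of_fun g"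
proof -
  have reduce: "perm_of_fun h = perm_of_fun (\<lambda>x. h x mod d)" for h
  proof -
    have "mset_of h = mset_of (\<lambda>x. h x mod d) + mset_of (\<lambda>x. d * (h x div d))"
      by (simp add: mset_of_add[symmetric])
    then show ?thesis
      by (simp add: perm_of_fun_def perm_of_mset_add_mset_of_period_mult)
  qed
  have "mset_of (\<lambda>x. f x mod d) = mset_of (\<lambda>x. g x mod d)"
    using assms by (rule mset_of_cong)
  then show ?thesis
    by (metis reduce perm_of_fun_def)
qed

(* The group (Z/d)^S, encoded as extensional functions S \<rightarrow> {..<d}, with addition add_residue
   and subtraction sub_residue. *)
definition residues :: "('a \<Rightarrow> nat) set" where
  "residues = S \<rightarrow>\<^sub>E {..<d}"

definition kernel_residues :: "('a \<Rightarrow> nat) set" where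
  "kernel_residues = {k \<in> residues. perm_of_fun k = \<one>\<^bsub>Sym\<^esub>}"

definition add_residue :: "('a \<Rightarrow> nat) \<Rightarrow> ('a \<Rightarrow> nat) \<Rightarrow> 'a \<Rightarrow> nat" where
  "add_residue r k = (\<lambda>x\<in>S. (r x + k x) mod d)"

definition sub_residue :: "('a \<Rightarrow> nat) \<Rightarrow> ('a \<Rightarrow> nat) \<Rightarrow> 'a \<Rightarrow> nat" where
  "sub_residue f r = (\<lambda>x\<in>S. (f x + (d - r x)) mod d)"

lemma restrict_mod_in_residues: "(\<lambda>x\<in>S. h x mod d) \<in> residues"
  using period_pos by (auto simp: residues_def)

lemma add_residue_in_residues: "add_residue r k \<in> residues"
  unfolding add_residue_def by (rule restrict_mod_in_residues)

lemma sub_residue_in_residues: "sub_residue f r \<in> residues"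
  unfolding sub_residue_def by (rule restrict_mod_in_residues)

lemma card_residues: "card residues = d ^ card S"
  using finite_S by (simp add: residues_def card_PiE)

lemma perm_of_fun_image_residues: "perm_of_fun ` residues = cs_group S op"
proof
  show "perm_of_fun ` residues \<subseteq> cs_group S op"
    by (auto simp: perm_of_fun_def perm_of_mset_in_cs_group)
  show "cs_group S op \<subseteq> perm_of_fun ` residues"
  proof
    fix g assume "g \<in> cs_group S op"
    then obtain M where "set_mset M \<subseteq> S" and "g = perm_of_mset M"
      by (auto simp: cs_group_eq_mset_perms)
    then have "g = perm_of_fun (count M)"
      by (simp add: perm_of_fun_def mset_of_count)
    also have "\<dots> = perm_of_fun (\<lambda>x\<in>S. count M x mod d)"
      by (rule perm_of_fun_cong_mod) simp
    finally show "g \<in> perm_of_fun ` residues"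
      using restrict_mod_in_residues by blast
  qed
qed

lemma perm_of_fun_add_residue:
  assumes "k \<in> kernel_residues"
  shows "perm_of_fun (add_residue r k) = perm_of_fun r"
proof -
  have "perm_of_fun (add_residue r k) = perm_of_mset (mset_of k + mset_of r)"
    unfolding perm_of_fun_def add_residue_def mset_of_add[symmetric]
    by (fold perm_of_fun_def, rule perm_of_fun_cong_mod) (simp add: add.commute)
  also have "\<dots> = perm_of_mset ({#} + mset_of r)"
    using assms by (intro perm_of_mset_union_cong) (simp add: kernel_residues_def perm_of_fun_def)
  finally show ?thesis
    by (simp add: perm_of_fun_def)
qed

lemma sub_residue_in_kernel:
  assumes "f \<in> residues" and "r \<in> residues" and "perm_of_fun f = perm_of_fun r"
  shows "sub_residue f r \<in> kernel_residues"
proof -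
  have "perm_of_fun (sub_residue f r) = perm_of_mset (mset_of f + mset_of (\<lambda>x. d - r x))"
    unfolding perm_of_fun_def sub_residue_def mset_of_add[symmetric]
    by (fold perm_of_fun_def, rule perm_of_fun_cong_mod) simp
  also have "\<dots> = perm_of_mset (mset_of r + mset_of (\<lambda>x. d - r x))"
    using assms(3) by (intro perm_of_mset_union_cong) (simp add: perm_of_fun_def)
  also have "mset_of r + mset_of (\<lambda>x. d - r x) = {#} + mset_of (\<lambda>x. d * 1)"
    unfolding mset_of_add[symmetric] using assms(2)
    by (auto simp: residues_def PiE_iff less_imp_le intro!: mset_of_cong)
  also have "perm_of_mset ({#} + mset_of (\<lambda>x. d * 1)) = \<one>\<^bsub>Sym\<^esub>"
    by (simp only: perm_of_mset_add_mset_of_period_mult perm_of_mset_empty)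
  finally show ?thesis
    by (simp add: kernel_residues_def sub_residue_in_residues)
qed

lemma residues_eqI:
  "f \<in> residues \<Longrightarrow> g \<in> residues \<Longrightarrow> (\<And>x. x \<in> S \<Longrightarrow> f x = g x) \<Longrightarrow> f = g"
  unfolding residues_def by (rule PiE_ext)

lemma sub_residue_add_residue:
  assumes "r \<in> residues" and "k \<in> residues"
  shows "sub_residue (add_residue r k) r = k"
proof (rule residues_eqI)
  fix x assume "x \<in> S"
  then have "r x < d" and "k x < d"
    using assms by (auto simp: residues_def)
  have "((r x + k x) mod d + (d - r x)) mod d = (r x + k x + (d - r x)) mod d"
    by (simp add: mod_add_left_eq)
  also have "\<dots> = k x"
    using \<open>r x < d\<close> \<open>k x < d\<close> by simp
  finally show "sub_residue (add_residue r k) r x = k x"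
    using \<open>x \<in> S\<close> by (simp add: sub_residue_def add_residue_def)
qed (simp_all add: assms sub_residue_in_residues)

lemma add_residue_sub_residue:
  assumes "r \<in> residues" and "f \<in> residues"
  shows "add_residue r (sub_residue f r) = f"
proof (rule residues_eqI)
  fix x assume "x \<in> S"
  then have "r x < d" and "f x < d"
    using assms by (auto simp: residues_def)
  have "(r x + (f x + (d - r x)) mod d) mod d = (r x + (f x + (d - r x))) mod d"
    by (simp add: mod_add_right_eq)
  also have "\<dots> = f x"
    using \<open>r x < d\<close> \<open>f x < d\<close> by simp
  finally show "add_residue r (sub_residue f r) x = f x"
    using \<open>x \<in> S\<close> by (simp add: sub_residue_def add_residue_def)
qed (simp_all add: assms add_residue_in_residues)

lemma bij_betw_add_residue_fibre:
  assumes "r \<in> residues"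
  shows "bij_betw (add_residue r) kernel_residues {f \<in> residues. perm_of_fun f = perm_of_fun r}"
proof (rule bij_betw_byWitness[where f' = "\<lambda>f. sub_residue f r"])
  show "\<forall>k\<in>kernel_residues. sub_residue (add_residue r k) r = k"
    using assms by (simp add: kernel_residues_def sub_residue_add_residue)
  show "\<forall>f\<in>{f \<in> residues. perm_of_fun f = perm_of_fun r}. add_residue r (sub_residue f r) = f"
    using assms by (simp add: add_residue_sub_residue)
  show "add_residue r ` kernel_residues \<subseteq> {f \<in> residues. perm_of_fun f = perm_of_fun r}"
    by (auto simp: add_residue_in_residues perm_of_fun_add_residue)
  show "(\<lambda>f. sub_residue f r) ` {f \<in> residues. perm_of_fun f = perm_of_fun r} \<subseteq> kernel_residues"
    using assms by (auto intro: sub_residue_in_kernel)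
qed

lemma card_cs_group_dvd_period_power: "card (cs_group S op) dvd d ^ card S"
proof -
  have "card residues = card kernel_residues * card (perm_of_fun ` residues)"
  proof (rule card_eq_card_fibre_mult_card_image)
    show "finite residues"
      using finite_S by (simp add: residues_def finite_PiE)
    fix g assume "g \<in> perm_of_fun ` residues"
    then obtain r where "r \<in> residues" and "g = perm_of_fun r"
      by blast
    then show "card {f \<in> residues. perm_of_fun f = g} = card kernel_residues"
      using bij_betw_same_card[OF bij_betw_add_residue_fibre] by simp
  qed
  then show ?thesis
    by (simp add: card_residues perm_of_fun_image_residues)
qed

end

theorem mainTheorem7:
  fixes S :: "'a set" and op :: "'a \<Rightarrow> 'a \<Rightarrow> 'a" and n d :: nat
  assumes "cycle_set S op"
    and "finite S" and "S \<noteq> {}"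
    and "card S = n"
    and "indecomposable S op"
    and "is_class S op d"
  shows "n dvd card (cs_group S op) \<and>
         (\<forall>p::nat. prime p \<and> p dvd n \<longrightarrow> p dvd card (cs_group S op) \<and> p dvd d) \<and>
         (\<forall>p k::nat. prime p \<and> d = p ^ k \<longrightarrow> (\<exists>m. n = p ^ m))"
proof -
  interpret finite_cycle_set_period S op d
    using assms(1,2,6) by unfold_locales (auto simp: is_class_def)
  obtain s where "s \<in> S"
    using assms(3) by blast
  have n_dvd_G: "n dvd card (cs_group S op)"
    using card_dvd_card_cs_group[OF assms(5) \<open>s \<in> S\<close>] assms(4) by simp
  have G_dvd: "card (cs_group S op) dvd d ^ n"
    using card_cs_group_dvd_period_power assms(4) by simp
  have "p dvd card (cs_group S op) \<and> p dvd d" if "prime p" and "p dvd n" for p :: nat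
    using that n_dvd_G G_dvd by (meson dvd_trans prime_dvd_power)
  moreover have "\<exists>m. n = p ^ m" if "prime p" and "d = p ^ k" for p k :: nat
  proof -
    have "n dvd p ^ (k * n)"
      using n_dvd_G G_dvd that(2) by (metis dvd_trans power_mult)
    then show ?thesis
      using divides_primepow_nat[OF that(1)] by blast
  qed
  ultimately show ?thesis
    using n_dvd_G by blast
qed

end
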